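(* Consider the following random process. A segment of length $1$ is split into $3$ pieces by choosing two independent uniformly random points on it. If the three pieces can form a (nondegenerate) triangle, the process stops. Otherwise, the longest of the three pieces is taken and split into $3$ pieces in the same way (two independent uniformly random points on that piece), and one again checks whether these three pieces form a triangle; this is repeated until a triangle is formed. Then the expected perimeter of the triangle formed at the end of the process is $\frac12$, and its expected area is $\frac{8\pi}{2205}$.
   Context: Three lengths form a triangle iff each is less than the sum of the other two. *)

theory Defs
  imports "HOL-Probability.Probability"
begin

definition is_triangle :: "real \<Rightarrow> real \<Rightarrow> real \<Rightarrow> bool" where
  "is_triangle a b c \<longleftrightarrow> a < b + c \<and> b < a + c \<and> c < a + b"

definition tri_area :: "real \<Rightarrow> real \<Rightarrow> real \<Rightarrow> real" where
  "tri_area a b c = (let s = (a + b + c) / 2 in sqrt (s * (s - a) * (s - b) * (s - c)))"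

text \<open>Sample space: an i.i.d. sequence of uniform points in [0,1]. At step k the
  two cut points are u (2k) and u (2k+1), measured relative to the piece being cut.\<close>
definition Omega :: "(nat \<Rightarrow> real) measure" where
  "Omega = PiM UNIV (\<lambda>_. uniform_measure lborel {0..1::real})"

definition piece1 :: "real \<Rightarrow> real \<Rightarrow> real" where "piece1 x y = min x y"
definition piece2 :: "real \<Rightarrow> real \<Rightarrow> real" where "piece2 x y = \<bar>x - y\<bar>"
definition piece3 :: "real \<Rightarrow> real \<Rightarrow> real" where "piece3 x y = 1 - max x y"

definition rel_tri :: "(nat \<Rightarrow> real) \<Rightarrow> nat \<Rightarrow> bool" where
  "rel_tri u k = is_triangle (piece1 (u (2*k)) (u (2*k+1))) (piece2 (u (2*k)) (u (2*k+1)))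
                              (piece3 (u (2*k)) (u (2*k+1)))"

fun seg_len :: "(nat \<Rightarrow> real) \<Rightarrow> nat \<Rightarrow> real" where
  "seg_len u 0 = 1"
| "seg_len u (Suc k) = seg_len u k *
     max (piece1 (u (2*k)) (u (2*k+1))) (max (piece2 (u (2*k)) (u (2*k+1))) (piece3 (u (2*k)) (u (2*k+1))))"

definition stop_time :: "(nat \<Rightarrow> real) \<Rightarrow> nat" where
  "stop_time u = (LEAST k. rel_tri u k)"

definition final_sides :: "(nat \<Rightarrow> real) \<Rightarrow> real \<times> real \<times> real" where
  "final_sides u = (let k = stop_time u; L = seg_len u k; x = u (2*k); y = u (2*k+1) in
     (L * piece1 x y, L * piece2 x y, L * piece3 x y))"

definition final_perimeter :: "(nat \<Rightarrow> real) \<Rightarrow> real" where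
  "final_perimeter u = (case final_sides u of (a, b, c) \<Rightarrow> a + b + c)"

definition final_area :: "(nat \<Rightarrow> real) \<Rightarrow> real" where
  "final_area u = (case final_sides u of (a, b, c) \<Rightarrow> tri_area a b c)"

end

theory Submission
  imports Defs
begin

(* Write M for the longest of the three pieces cut at the first two points. If they do not form a
   triangle, the rest of the process is an independent copy of the whole process scaled by M. Hence a
   quantity X of the final triangle that scales like the k-th power of length satisfies the renewal
   equation X = E[X_0; triangle] + E[M^k; no triangle] X, where X_0 is its value for the first three
   pieces. For the perimeter (k = 1) this reads X = 1/4 + X/2, for the area (k = 2)
   X = pi/420 + 11/32 X, and for the probability of never stopping (k = 0) p = 3/4 p. All three
   quantities are finite, so they equal 1/2, 8 pi/2205 and 0. The coefficients are elementary
   integrals over the unit square; the area integral reduces to the area of half discs. *)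

abbreviation uniform01 :: "real measure" where
  "uniform01 \<equiv> uniform_measure lborel {0..1}"

lemma sets_uniform01 [measurable_cong]: "sets uniform01 = sets borel"
  by simp

interpretation U01: prob_space uniform01
  by (rule prob_space_uniform_measure) auto

interpretation Seq: sequence_space uniform01
  by unfold_locales

lemma Omega_eq_sequence_space: "Omega = Seq.S"
  unfolding Omega_def ..

interpretation Omega: prob_space Omega
  unfolding Omega_eq_sequence_space by (rule Seq.P.prob_space_axioms)

lemma space_Omega [simp]: "space Omega = UNIV"
  by (simp add: Omega_def space_PiM)

lemma (in sequence_space) nn_integral_case_nat:
  assumes [measurable]: "f \<in> borel_measurable S"
  shows "(\<integral>\<^sup>+w. f w \<partial>S) = (\<integral>\<^sup>+x. \<integral>\<^sup>+w. f (case_nat x w) \<partial>S \<partial>M)"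
proof -
  have "(\<integral>\<^sup>+w. f w \<partial>S) = (\<integral>\<^sup>+z. f ((\<lambda>(s, \<omega>). case_nat s \<omega>) z) \<partial>(M \<Otimes>\<^sub>M S))"
    by (subst PiM_iter[symmetric]) (simp add: nn_integral_distr)
  also have "\<dots> = (\<integral>\<^sup>+x. \<integral>\<^sup>+w. f ((\<lambda>(s, \<omega>). case_nat s \<omega>) (x, w)) \<partial>S \<partial>M)"
    by (rule P.nn_integral_fst[symmetric]) measurable
  finally show ?thesis by simp
qed

definition prepend2 :: "real \<Rightarrow> real \<Rightarrow> (nat \<Rightarrow> real) \<Rightarrow> nat \<Rightarrow> real" where
  "prepend2 x y w = case_nat x (case_nat y w)"

lemma prepend2_simps [simp]:
  "prepend2 x y w 0 = x" "prepend2 x y w (Suc 0) = y" "prepend2 x y w (Suc (Suc n)) = w n"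
  by (simp_all add: prepend2_def)

lemma nn_integral_Omega_prepend2:
  assumes "f \<in> borel_measurable Omega"
  shows "(\<integral>\<^sup>+u. f u \<partial>Omega) = (\<integral>\<^sup>+x. \<integral>\<^sup>+y. \<integral>\<^sup>+w. f (prepend2 x y w) \<partial>Omega \<partial>uniform01 \<partial>uniform01)"
proof -
  have [measurable]: "f \<in> borel_measurable Seq.S"
    using assms by (simp add: Omega_eq_sequence_space)
  have [measurable]: "(\<lambda>w. case_nat x w) \<in> measurable Seq.S Seq.S" for x
    by (rule measurable_PiM_single') (auto simp: space_PiM split: nat.split)
  have "(\<integral>\<^sup>+u. f u \<partial>Seq.S) = (\<integral>\<^sup>+x. \<integral>\<^sup>+w. f (case_nat x w) \<partial>Seq.S \<partial>uniform01)"
    by (rule Seq.nn_integral_case_nat) measurable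
  also have "\<dots> = (\<integral>\<^sup>+x. \<integral>\<^sup>+y. \<integral>\<^sup>+w. f (case_nat x (case_nat y w)) \<partial>Seq.S \<partial>uniform01 \<partial>uniform01)"
    by (intro nn_integral_cong Seq.nn_integral_case_nat) measurable
  finally show ?thesis
    unfolding Omega_eq_sequence_space prepend2_def .
qed

lemma AE_Omega_unit_interval: "AE u in Omega. \<forall>n. u n \<in> {0..1}"
proof (subst AE_all_countable, intro allI)
  fix n
  have "AE x in uniform01. x \<in> {0..1}"
    by (rule AE_uniform_measureI) auto
  then have "AE x in distr Seq.S uniform01 (\<lambda>\<omega>. \<omega> n). x \<in> {0..1}"
    by (simp only: Seq.PiM_component[OF UNIV_I])
  then have "AE \<omega> in Seq.S. \<omega> n \<in> {0..1}"
    by (rule AE_distrD[rotated]) measurable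
  then show "AE u in Omega. u n \<in> {0..1}"
    unfolding Omega_eq_sequence_space .
qed

definition cut_triangle :: "real \<Rightarrow> real \<Rightarrow> bool" where
  "cut_triangle x y \<longleftrightarrow> is_triangle (piece1 x y) (piece2 x y) (piece3 x y)"

definition longest_piece :: "real \<Rightarrow> real \<Rightarrow> real" where
  "longest_piece x y = max (piece1 x y) (max (piece2 x y) (piece3 x y))"

definition cut_area :: "real \<Rightarrow> real \<Rightarrow> real" where
  "cut_area x y = tri_area (piece1 x y) (piece2 x y) (piece3 x y)"

lemma measurable_cut_triangle [measurable (raw)]:
  assumes [measurable]: "f \<in> borel_measurable M" "g \<in> borel_measurable M"
  shows "Measurable.pred M (\<lambda>z. cut_triangle (f z) (g z))"
  unfolding cut_triangle_def is_triangle_def piece1_def piece2_def piece3_def by measurable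

lemma measurable_longest_piece [measurable (raw)]:
  assumes [measurable]: "f \<in> borel_measurable M" "g \<in> borel_measurable M"
  shows "(\<lambda>z. longest_piece (f z) (g z)) \<in> borel_measurable M"
  unfolding longest_piece_def piece1_def piece2_def piece3_def by measurable

lemma measurable_cut_area [measurable (raw)]:
  assumes [measurable]: "f \<in> borel_measurable M" "g \<in> borel_measurable M"
  shows "(\<lambda>z. cut_area (f z) (g z)) \<in> borel_measurable M"
  unfolding cut_area_def tri_area_def Let_def piece1_def piece2_def piece3_def by measurable

lemma pieces_sum: "piece1 x y + piece2 x y + piece3 x y = 1"
  unfolding piece1_def piece2_def piece3_def by (auto simp: min_def max_def)

lemma longest_piece_nonneg: "0 \<le> longest_piece x y"
  unfolding longest_piece_def piece2_def by (auto simp: max_def)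

lemma longest_piece_le_1: "x \<in> {0..1} \<Longrightarrow> y \<in> {0..1} \<Longrightarrow> longest_piece x y \<le> 1"
  by (auto simp: longest_piece_def piece1_def piece2_def piece3_def)

lemma cut_triangle_commute: "cut_triangle x y = cut_triangle y x"
  by (auto simp: cut_triangle_def is_triangle_def piece1_def piece2_def piece3_def min_def max_def)

lemma longest_piece_commute: "longest_piece x y = longest_piece y x"
  by (auto simp: longest_piece_def piece1_def piece2_def piece3_def min_def max_def)

lemma cut_area_commute: "cut_area x y = cut_area y x"
  unfolding cut_area_def piece1_def piece2_def piece3_def
  by (simp add: min.commute max.commute abs_minus_commute)

lemma cut_triangle_ordered:
  "x \<le> y \<Longrightarrow> cut_triangle x y \<longleftrightarrow> x < 1/2 \<and> 1/2 < y \<and> y < x + 1/2"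
  by (auto simp: cut_triangle_def is_triangle_def piece1_def piece2_def piece3_def min_def max_def)

lemma longest_piece_ordered: "x \<le> y \<Longrightarrow> longest_piece x y = max x (max (y - x) (1 - y))"
  by (auto simp: longest_piece_def piece1_def piece2_def piece3_def min_def max_def)

lemma cut_area_ordered:
  assumes "x \<le> y"
  shows "cut_area x y = sqrt ((1/2 - x) / 2) * sqrt ((y - 1/2) * (x + 1/2 - y))"
proof -
  have "cut_area x y = sqrt (1/2 * (1/2 - x) * (1/2 - (y - x)) * (1/2 - (1 - y)))"
    using assms
    by (auto simp: cut_area_def tri_area_def Let_def piece1_def piece2_def piece3_def min_def max_def)
  also have "1/2 * (1/2 - x) * (1/2 - (y - x)) * (1/2 - (1 - y)) = ((1/2 - x) / 2) * ((y - 1/2) * (x + 1/2 - y))"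
    by (simp add: field_simps)
  finally show ?thesis
    by (simp only: real_sqrt_mult)
qed

lemma cut_area_eq: "cut_area x y = sqrt (1/2 * (1/2 - piece1 x y) * (1/2 - piece2 x y) * (1/2 - piece3 x y))"
  unfolding cut_area_def tri_area_def Let_def using pieces_sum[of x y] by simp

lemma cut_area_nonneg:
  assumes "cut_triangle x y"
  shows "0 \<le> cut_area x y"
proof -
  have "0 < 1/2 - piece1 x y" "0 < 1/2 - piece2 x y" "0 < 1/2 - piece3 x y"
    using assms pieces_sum[of x y] by (auto simp: cut_triangle_def is_triangle_def)
  then show ?thesis
    unfolding cut_area_eq by simp
qed

lemma cut_area_le_1:
  assumes "x \<in> {0..1}" "y \<in> {0..1}"
  shows "cut_area x y \<le> 1"
proof -
  have "\<bar>1/2 - piece1 x y\<bar> \<le> 1/2" "\<bar>1/2 - piece2 x y\<bar> \<le> 1/2" "\<bar>1/2 - piece3 x y\<bar> \<le> 1/2"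
    using assms unfolding piece1_def piece2_def piece3_def by (auto split: abs_split)
  then have "\<bar>1/2 - piece1 x y\<bar> * \<bar>1/2 - piece2 x y\<bar> * \<bar>1/2 - piece3 x y\<bar> \<le> (1/2) * (1/2) * (1/2)"
    by (intro mult_mono) auto
  then have "\<bar>1/2 * (1/2 - piece1 x y) * (1/2 - piece2 x y) * (1/2 - piece3 x y)\<bar> \<le> 1"
    by (simp add: abs_mult)
  then have "1/2 * (1/2 - piece1 x y) * (1/2 - piece2 x y) * (1/2 - piece3 x y) \<le> 1"
    by linarith
  then show ?thesis
    unfolding cut_area_eq by simp
qed

lemma tri_area_scale:
  assumes "0 \<le> m"
  shows "tri_area (m * a) (m * b) (m * c) = m\<^sup>2 * tri_area a b c"
proof -
  have "(m*a + m*b + m*c)/2 * ((m*a + m*b + m*c)/2 - m*a) * ((m*a + m*b + m*c)/2 - m*b) * ((m*a + m*b + m*c)/2 - m*c)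
     = (m\<^sup>2)\<^sup>2 * ((a+b+c)/2 * ((a+b+c)/2 - a) * ((a+b+c)/2 - b) * ((a+b+c)/2 - c))"
    by (simp add: algebra_simps power2_eq_square)
  then show ?thesis
    unfolding tri_area_def Let_def using assms by (simp only: real_sqrt_mult real_sqrt_abs) simp
qed

lemma rel_tri_prepend2_0 [simp]: "rel_tri (prepend2 x y w) 0 = cut_triangle x y"
  by (simp add: rel_tri_def cut_triangle_def)

lemma rel_tri_prepend2_Suc [simp]: "rel_tri (prepend2 x y w) (Suc k) = rel_tri w k"
  by (simp add: rel_tri_def)

lemma seg_len_Suc_longest_piece: "seg_len u (Suc k) = seg_len u k * longest_piece (u (2*k)) (u (2*k+1))"
  by (simp add: longest_piece_def)

lemma seg_len_prepend2_Suc: "seg_len (prepend2 x y w) (Suc k) = longest_piece x y * seg_len w k"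
  by (induction k) (simp_all del: seg_len.simps(2) add: seg_len_Suc_longest_piece)

lemma seg_len_nonneg: "0 \<le> seg_len u k"
  by (induction k) (simp_all del: seg_len.simps(2) add: seg_len_Suc_longest_piece longest_piece_nonneg)

lemma seg_len_le_1: "(\<And>n. u n \<in> {0..1}) \<Longrightarrow> seg_len u k \<le> 1"
  by (induction k)
    (simp_all del: seg_len.simps(2) add: seg_len_Suc_longest_piece mult_le_one seg_len_nonneg
      longest_piece_nonneg longest_piece_le_1)

lemma stop_time_prepend2:
  assumes "\<exists>k. rel_tri w k"
  shows "stop_time (prepend2 x y w) = (if cut_triangle x y then 0 else Suc (stop_time w))"
proof (cases "cut_triangle x y")
  case True
  then show ?thesis
    unfolding stop_time_def by (simp add: Least_eq_0)
next
  case False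
  then show ?thesis
    unfolding stop_time_def using assms
    by (subst Least_Suc[where n = "Suc (LEAST k. rel_tri w k)"]) (auto intro: LeastI_ex)
qed

lemma final_perimeter_eq: "final_perimeter u = seg_len u (stop_time u)"
  unfolding final_perimeter_def final_sides_def Let_def
  using pieces_sum[of "u (2 * stop_time u)" "u (2 * stop_time u + 1)"]
  by (simp del: seg_len.simps add: distrib_left[symmetric])

lemma final_area_eq:
  "final_area u = (seg_len u (stop_time u))\<^sup>2 * cut_area (u (2 * stop_time u)) (u (2 * stop_time u + 1))"
  unfolding final_area_def final_sides_def Let_def cut_area_def
  by (simp add: tri_area_scale seg_len_nonneg)

lemma final_perimeter_prepend2:
  assumes "\<exists>k. rel_tri w k"
  shows "final_perimeter (prepend2 x y w) = (if cut_triangle x y then 1 else longest_piece x y * final_perimeter w)"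
  using assms by (simp del: seg_len.simps(2) add: final_perimeter_eq stop_time_prepend2 seg_len_prepend2_Suc)

lemma final_area_prepend2:
  assumes "\<exists>k. rel_tri w k"
  shows "final_area (prepend2 x y w) = (if cut_triangle x y then cut_area x y else (longest_piece x y)\<^sup>2 * final_area w)"
  using assms
  by (simp del: seg_len.simps(2) add: final_area_eq stop_time_prepend2 seg_len_prepend2_Suc power_mult_distrib)

(* Deliberately not a [measurable] rule: the measurability prover would match it against any
   term of the form t n with n :: nat. *)
lemma measurable_coordinate_Omega: "(\<lambda>u. u n) \<in> borel_measurable Omega"
  unfolding Omega_def by measurable

lemma measurable_rel_tri [measurable]: "Measurable.pred Omega (\<lambda>u. rel_tri u k)"
proof -
  note measurable_coordinate_Omega [measurable]
  show ?thesis
    unfolding rel_tri_def cut_triangle_def[symmetric] by measurable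
qed

lemma measurable_seg_len [measurable]: "(\<lambda>u. seg_len u k) \<in> borel_measurable Omega"
proof -
  note measurable_coordinate_Omega [measurable]
  show ?thesis
    by (induction k) (simp_all del: seg_len.simps(2) add: seg_len_Suc_longest_piece)
qed

lemma measurable_stop_time [measurable]: "stop_time \<in> measurable Omega (count_space UNIV)"
  unfolding stop_time_def by measurable

lemma measurable_final_perimeter [measurable]: "final_perimeter \<in> borel_measurable Omega"
  unfolding final_perimeter_eq
  by (rule measurable_compose_countable[OF _ measurable_stop_time, where f = "\<lambda>k u. seg_len u k"])
    measurable

lemma measurable_final_area [measurable]: "final_area \<in> borel_measurable Omega"
proof -
  note measurable_coordinate_Omega [measurable]
  show ?thesis
    unfolding final_area_eq
    by (rule measurable_compose_countable[OF _ measurable_stop_time,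
          where f = "\<lambda>k u. (seg_len u k)\<^sup>2 * cut_area (u (2*k)) (u (2*k+1))"])
      measurable
qed

definition cut_expectation :: "(real \<Rightarrow> real \<Rightarrow> real) \<Rightarrow> ennreal" where
  "cut_expectation g = (\<integral>\<^sup>+x. \<integral>\<^sup>+y. ennreal (g x y) \<partial>uniform01 \<partial>uniform01)"

interpretation U01_pair: pair_prob_space uniform01 uniform01
  by unfold_locales

lemma cut_expectation_add_mult:
  assumes [measurable]: "(\<lambda>z. g (fst z) (snd z)) \<in> borel_measurable (uniform01 \<Otimes>\<^sub>M uniform01)"
    "(\<lambda>z. h (fst z) (snd z)) \<in> borel_measurable (uniform01 \<Otimes>\<^sub>M uniform01)"
  shows "(\<integral>\<^sup>+x. \<integral>\<^sup>+y. ennreal (g x y) + ennreal (h x y) * c \<partial>uniform01 \<partial>uniform01)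
    = cut_expectation g + cut_expectation h * c"
proof -
  have [measurable]: "\<And>x. g x \<in> borel_measurable uniform01" "\<And>x. h x \<in> borel_measurable uniform01"
    using measurable_Pair2[OF assms(1)] measurable_Pair2[OF assms(2)] by auto
  have "(\<integral>\<^sup>+x. \<integral>\<^sup>+y. ennreal (g x y) + ennreal (h x y) * c \<partial>uniform01 \<partial>uniform01)
    = (\<integral>\<^sup>+x. (\<integral>\<^sup>+y. ennreal (g x y) \<partial>uniform01) + (\<integral>\<^sup>+y. ennreal (h x y) \<partial>uniform01) * c \<partial>uniform01)"
    by (rule nn_integral_cong) (simp add: nn_integral_add nn_integral_multc)
  also have "\<dots> = cut_expectation g + cut_expectation h * c"
    unfolding cut_expectation_def by (simp add: nn_integral_add nn_integral_multc)
  finally show ?thesis .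
qed

lemma AE_uniform01_neq: "AE y in uniform01. y \<noteq> x"
  by (rule AE_uniform_measureI) (auto intro: eventually_mono[OF AE_lborel_singleton[of x]])

lemma cut_expectation_symmetric:
  assumes [measurable]: "(\<lambda>z. g (fst z) (snd z)) \<in> borel_measurable (uniform01 \<Otimes>\<^sub>M uniform01)"
    and sym: "\<And>x y. g x y = g y x"
  shows "cut_expectation g
    = 2 * (\<integral>\<^sup>+x. \<integral>\<^sup>+y. ennreal (if x < y then g x y else 0) \<partial>uniform01 \<partial>uniform01)"
proof -
  have "cut_expectation g = (\<integral>\<^sup>+x. \<integral>\<^sup>+y. ennreal (if x < y then g x y else 0)
      + ennreal (if y < x then g x y else 0) * 1 \<partial>uniform01 \<partial>uniform01)"
    unfolding cut_expectation_def
  proof (rule nn_integral_cong, rule nn_integral_cong_AE)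
    fix x
    show "AE y in uniform01. ennreal (g x y)
        = ennreal (if x < y then g x y else 0) + ennreal (if y < x then g x y else 0) * 1"
      using AE_uniform01_neq[of x] by eventually_elim auto
  qed
  also have "\<dots> = cut_expectation (\<lambda>x y. if x < y then g x y else 0)
      + cut_expectation (\<lambda>x y. if y < x then g x y else 0) * 1"
    by (rule cut_expectation_add_mult) measurable
  also have "cut_expectation (\<lambda>x y. if y < x then g x y else 0)
      = (\<integral>\<^sup>+y. \<integral>\<^sup>+x. ennreal (if y < x then g x y else 0) \<partial>uniform01 \<partial>uniform01)"
    unfolding cut_expectation_def by (rule U01_pair.Fubini'[symmetric]) measurable
  also have "\<dots> = cut_expectation (\<lambda>x y. if x < y then g x y else 0)"
    unfolding cut_expectation_def by (intro nn_integral_cong) (metis sym)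
  finally show ?thesis
    by (simp add: mult_2 cut_expectation_def)
qed

lemma nn_integral_uniform01:
  assumes "\<And>x. x \<in> {0..1} \<Longrightarrow> F x = ennreal (G x)" and [measurable]: "G \<in> borel_measurable borel"
  shows "(\<integral>\<^sup>+x. F x \<partial>uniform01) = (\<integral>\<^sup>+x. ennreal (G x) * indicator {0..1} x \<partial>lborel)"
proof -
  have "AE x in uniform01. F x = ennreal (G x)"
    by (rule AE_uniform_measureI) (auto simp: assms(1))
  then have "(\<integral>\<^sup>+x. F x \<partial>uniform01) = (\<integral>\<^sup>+x. ennreal (G x) \<partial>uniform01)"
    by (rule nn_integral_cong_AE)
  also have "\<dots> = (\<integral>\<^sup>+x. ennreal (G x) * indicator {0..1} x \<partial>lborel)"
    by (subst nn_integral_uniform_measure) (auto simp: divide_ennreal_def)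
  finally show ?thesis .
qed

lemma nn_integral_lborel_cong_finite:
  fixes f g :: "real \<Rightarrow> ennreal"
  assumes "finite S" and "\<And>y. y \<notin> S \<Longrightarrow> f y = g y"
  shows "integral\<^sup>N lborel f = integral\<^sup>N lborel g"
proof (rule nn_integral_cong_AE)
  show "AE y in lborel. f y = g y"
    using AE_not_in[OF finite_imp_null_set_lborel[OF assms(1)]] by eventually_elim (rule assms(2))
qed

lemma nn_integral_interval_FTC:
  fixes F f :: "real \<Rightarrow> real"
  assumes "a \<le> b" and "continuous_on {a..b} F"
    and "\<And>y. a < y \<Longrightarrow> y < b \<Longrightarrow> (F has_real_derivative f y) (at y)"
    and nonneg: "\<And>y. a \<le> y \<Longrightarrow> y \<le> b \<Longrightarrow> 0 \<le> f y"
  shows "(\<integral>\<^sup>+y. ennreal (f y) * indicator {a..b} y \<partial>lborel) = ennreal (F b - F a)"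
    and "F a \<le> F b"
proof -
  have "(f has_integral F b - F a) {a..b}"
    using assms(1,2) by (rule fundamental_theorem_of_calculus_interior)
      (use assms(3) in \<open>auto simp: has_real_derivative_iff_has_vector_derivative[symmetric]\<close>)
  then show "(\<integral>\<^sup>+y. ennreal (f y) * indicator {a..b} y \<partial>lborel) = ennreal (F b - F a)"
    and "F a \<le> F b"
    using nonneg by (auto intro: nn_integral_has_integral_lebesgue' dest: has_integral_nonneg)
qed

lemma nn_integral_power_interval:
  fixes a b c :: real
  assumes "c \<le> a" "a \<le> b"
  shows "(\<integral>\<^sup>+y. ennreal ((y - c) ^ n) * indicator {a..b} y \<partial>lborel)
    = ennreal (((b - c) ^ Suc n - (a - c) ^ Suc n) / Suc n)"
  by (subst nn_integral_interval_FTC(1)[where F = "\<lambda>y. (y - c) ^ Suc n / Suc n"])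
    (use assms in \<open>auto intro!: derivative_eq_intros continuous_intros
      simp: diff_divide_distrib simp del: power_Suc\<close>)

lemma nn_integral_power_interval_mirror:
  fixes a b c :: real
  assumes "a \<le> b" "b \<le> c"
  shows "(\<integral>\<^sup>+y. ennreal ((c - y) ^ n) * indicator {a..b} y \<partial>lborel)
    = ennreal (((c - a) ^ Suc n - (c - b) ^ Suc n) / Suc n)"
  by (subst nn_integral_interval_FTC(1)[where F = "\<lambda>y. - ((c - y) ^ Suc n) / Suc n"])
    (use assms in \<open>auto intro!: derivative_eq_intros continuous_intros
      simp: diff_divide_distrib simp del: power_Suc\<close>)

definition nontriangle_moment :: "nat \<Rightarrow> real \<Rightarrow> real \<Rightarrow> real" where
  "nontriangle_moment n x y = (if cut_triangle x y then 0 else longest_piece x y ^ n)"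

lemma measurable_nontriangle_moment [measurable (raw)]:
  assumes [measurable]: "f \<in> borel_measurable M" "g \<in> borel_measurable M"
  shows "(\<lambda>z. nontriangle_moment n (f z) (g z)) \<in> borel_measurable M"
  unfolding nontriangle_moment_def by measurable

lemma nn_integral_nontriangle_moment_upper:
  assumes x: "x \<in> {0..1}"
  shows "(\<integral>\<^sup>+y. ennreal (if x < y then nontriangle_moment n x y else 0) \<partial>uniform01)
    = ennreal (if x < 1/2 then 2 * ((1 - x) ^ Suc n - (1/2) ^ Suc n) / Suc n else x ^ n * (1 - x))"
proof (cases "x < 1/2")
  case True
  let ?I = "((1 - x) ^ Suc n - (1/2) ^ Suc n) / Suc n"
  have "(\<integral>\<^sup>+y. ennreal (if x < y then nontriangle_moment n x y else 0) \<partial>uniform01)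
      = (\<integral>\<^sup>+y. ennreal (if x < y then nontriangle_moment n x y else 0) * indicator {0..1} y \<partial>lborel)"
    by (rule nn_integral_uniform01) (simp, measurable)
  also have "\<dots> = (\<integral>\<^sup>+y. ennreal ((1 - y) ^ n) * indicator {x..1/2} y + ennreal ((y - x) ^ n) * indicator {x+1/2..1} y \<partial>lborel)"
  proof (rule nn_integral_lborel_cong_finite[where S = "{x, 1/2, x+1/2, 1}"])
    fix y :: real
    assume "y \<notin> {x, 1/2, x+1/2, 1}"
    then consider "y < x" | "x < y" "y < 1/2" | "1/2 < y" "y < x + 1/2" | "x + 1/2 < y" "y < 1" | "1 < y"
      by force
    then show "ennreal (if x < y then nontriangle_moment n x y else 0) * indicator {0..1} y
        = ennreal ((1 - y) ^ n) * indicator {x..1/2} y + ennreal ((y - x) ^ n) * indicator {x+1/2..1} y"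
      by cases (use x True in \<open>auto simp: indicator_def nontriangle_moment_def
          cut_triangle_ordered longest_piece_ordered max_def\<close>)
  qed simp
  also have "\<dots> = (\<integral>\<^sup>+y. ennreal ((1 - y) ^ n) * indicator {x..1/2} y \<partial>lborel)
      + (\<integral>\<^sup>+y. ennreal ((y - x) ^ n) * indicator {x+1/2..1} y \<partial>lborel)"
    by (rule nn_integral_add) (simp_all only: measurable_lborel2, measurable)
  also have "(\<integral>\<^sup>+y. ennreal ((1 - y) ^ n) * indicator {x..1/2} y \<partial>lborel) = ennreal ?I"
    using nn_integral_power_interval_mirror[of x "1/2" 1 n] True by simp
  also have "(\<integral>\<^sup>+y. ennreal ((y - x) ^ n) * indicator {x+1/2..1} y \<partial>lborel) = ennreal ?I"
    using nn_integral_power_interval[of x "x + 1/2" 1 n] True x by simp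
  also have "ennreal ?I + ennreal ?I = ennreal (2 * ?I)"
    using True by (subst ennreal_plus[symmetric]) (auto intro!: divide_nonneg_pos power_mono simp del: power_Suc)
  finally show ?thesis
    using True by simp
next
  case False
  have "(\<integral>\<^sup>+y. ennreal (if x < y then nontriangle_moment n x y else 0) \<partial>uniform01)
      = (\<integral>\<^sup>+y. ennreal (if x < y then nontriangle_moment n x y else 0) * indicator {0..1} y \<partial>lborel)"
    by (rule nn_integral_uniform01) (simp, measurable)
  also have "\<dots> = (\<integral>\<^sup>+y. ennreal (x ^ n) * indicator {x..1} y \<partial>lborel)"
  proof (rule nn_integral_lborel_cong_finite[where S = "{x, 1}"])
    fix y :: real
    assume "y \<notin> {x, 1}"
    then show "ennreal (if x < y then nontriangle_moment n x y else 0) * indicator {0..1} y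
        = ennreal (x ^ n) * indicator {x..1} y"
      using x False by (auto simp: indicator_def nontriangle_moment_def
          cut_triangle_ordered longest_piece_ordered max_def)
  qed simp
  also have "\<dots> = ennreal (x ^ n * (1 - x))"
    using nn_integral_power_interval[of x x 1 0] x by (simp add: nn_integral_cmult ennreal_mult)
  finally show ?thesis
    using False by simp
qed

lemma cut_expectation_nontriangle_moment_eq_integral:
  "cut_expectation (nontriangle_moment n)
    = 2 * (\<integral>\<^sup>+x. ennreal (2 * ((1 - x) ^ Suc n - (1/2) ^ Suc n) / Suc n) * indicator {0..1/2} x
        + ennreal (x ^ n * (1 - x)) * indicator {1/2..1} x \<partial>lborel)"
proof -
  have "cut_expectation (nontriangle_moment n)
      = 2 * (\<integral>\<^sup>+x. \<integral>\<^sup>+y. ennreal (if x < y then nontriangle_moment n x y else 0) \<partial>uniform01 \<partial>uniform01)"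
    by (rule cut_expectation_symmetric)
      (auto simp: nontriangle_moment_def cut_triangle_commute longest_piece_commute)
  also have "(\<integral>\<^sup>+x. \<integral>\<^sup>+y. ennreal (if x < y then nontriangle_moment n x y else 0) \<partial>uniform01 \<partial>uniform01)
      = (\<integral>\<^sup>+x. ennreal (if x < 1/2 then 2 * ((1 - x) ^ Suc n - (1/2) ^ Suc n) / Suc n else x ^ n * (1 - x))
          * indicator {0..1} x \<partial>lborel)"
    by (rule nn_integral_uniform01)
      (simp_all add: nn_integral_nontriangle_moment_upper del: power_Suc of_nat_Suc)
  also have "\<dots> = (\<integral>\<^sup>+x. ennreal (2 * ((1 - x) ^ Suc n - (1/2) ^ Suc n) / Suc n) * indicator {0..1/2} x
      + ennreal (x ^ n * (1 - x)) * indicator {1/2..1} x \<partial>lborel)"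
    by (rule nn_integral_lborel_cong_finite[where S = "{1/2}"])
      (auto simp: indicator_def simp del: power_Suc of_nat_Suc)
  finally show ?thesis .
qed

lemma cut_expectation_nontriangle_moment:
  "cut_expectation (nontriangle_moment n)
    = ennreal (6 * (1 - real (n + 3) / 2 ^ (n + 2)) / real (Suc n * Suc (Suc n)))"
proof -
  let ?f = "\<lambda>x::real. 2 * ((1 - x) ^ Suc n - (1/2) ^ Suc n) / Suc n"
  let ?g = "\<lambda>x::real. x ^ n * (1 - x)"
  let ?F = "\<lambda>x::real. 2 * (- ((1 - x) ^ Suc (Suc n)) / Suc (Suc n) - (1/2) ^ Suc n * x) / Suc n"
  let ?G = "\<lambda>x::real. x ^ Suc n / Suc n - x ^ Suc (Suc n) / Suc (Suc n)"
  have dF: "(?F has_real_derivative ?f x) (at x)" for x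
    by (auto intro!: derivative_eq_intros simp: field_simps simp del: power_Suc of_nat_Suc)
  have dG: "(?G has_real_derivative ?g x) (at x)" for x
    by (auto intro!: derivative_eq_intros simp: field_simps simp del: power_Suc of_nat_Suc) simp
  have f_nonneg: "0 \<le> ?f x" if "0 \<le> x" "x \<le> 1/2" for x
  proof -
    have "(1/2) ^ Suc n \<le> (1 - x) ^ Suc n"
      using that by (intro power_mono) auto
    then show ?thesis
      by (simp del: power_Suc)
  qed
  have F: "(\<integral>\<^sup>+x. ennreal (?f x) * indicator {0..1/2} x \<partial>lborel) = ennreal (?F (1/2) - ?F 0)"
    "?F 0 \<le> ?F (1/2)"
    by (rule nn_integral_interval_FTC[OF _ _ dF f_nonneg]; auto intro!: continuous_intros)+
  have G: "(\<integral>\<^sup>+x. ennreal (?g x) * indicator {1/2..1} x \<partial>lborel) = ennreal (?G 1 - ?G (1/2))"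
    "?G (1/2) \<le> ?G 1"
    by (rule nn_integral_interval_FTC[OF _ _ dG]; auto intro!: continuous_intros)+
  have "cut_expectation (nontriangle_moment n) = 2 * (ennreal (?F (1/2) - ?F 0) + ennreal (?G 1 - ?G (1/2)))"
    unfolding cut_expectation_nontriangle_moment_eq_integral
    by (subst nn_integral_add) (simp_all only: measurable_lborel2 F G, measurable)
  also have "ennreal (?F (1/2) - ?F 0) + ennreal (?G 1 - ?G (1/2)) = ennreal (?F (1/2) - ?F 0 + (?G 1 - ?G (1/2)))"
    by (rule ennreal_plus[symmetric]) (use F(2) G(2) in linarith)+
  also have "2 * \<dots> = ennreal (2 * (?F (1/2) - ?F 0 + (?G 1 - ?G (1/2))))"
    by (rule numeral_mult_ennreal) (use F(2) G(2) in linarith)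
  also have "2 * (?F (1/2) - ?F 0 + (?G 1 - ?G (1/2))) = 6 * (1 - real (n + 3) / 2 ^ (n + 2)) / real (Suc n * Suc (Suc n))"
  proof -
    have "(1/2::real) ^ Suc n = (1/2) ^ n / 2" "(1/2::real) ^ Suc (Suc n) = (1/2) ^ n / 4"
      "(2::real) ^ (n + 2) = 2 ^ n * 4"
      by simp_all
    then show ?thesis
      by (simp add: divide_simps del: of_nat_Suc) (simp add: algebra_simps)
  qed
  finally show ?thesis .
qed

lemma cut_expectation_nontriangle: "cut_expectation (nontriangle_moment 0) = ennreal (3/4)"
  using cut_expectation_nontriangle_moment[of 0] by simp

lemma cut_expectation_longest_piece: "cut_expectation (nontriangle_moment 1) = ennreal (1/2)"
  using cut_expectation_nontriangle_moment[of 1] by simp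

lemma cut_expectation_longest_piece_sq: "cut_expectation (nontriangle_moment 2) = ennreal (11/32)"
  using cut_expectation_nontriangle_moment[of 2] by simp

lemma cut_expectation_triangle: "cut_expectation (\<lambda>x y. if cut_triangle x y then 1 else 0) = ennreal (1/4)"
proof -
  have "cut_expectation (\<lambda>x y. if cut_triangle x y then 1 else 0) + cut_expectation (nontriangle_moment 0) * 1
      = (\<integral>\<^sup>+x. \<integral>\<^sup>+y. ennreal (if cut_triangle x y then 1 else 0) + ennreal (nontriangle_moment 0 x y) * 1
          \<partial>uniform01 \<partial>uniform01)"
    by (rule cut_expectation_add_mult[symmetric]) measurable
  also have "\<dots> = 1"
  proof -
    have "ennreal (if cut_triangle x y then 1 else 0) + ennreal (nontriangle_moment 0 x y) * 1 = 1" for x y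
      by (simp add: nontriangle_moment_def)
    then show ?thesis
      by (simp add: U01.emeasure_space_1)
  qed
  finally have "cut_expectation (\<lambda>x y. if cut_triangle x y then 1 else 0) + ennreal (3/4) = 1"
    by (simp add: cut_expectation_nontriangle)
  then have "cut_expectation (\<lambda>x y. if cut_triangle x y then 1 else 0) = 1 - ennreal (3/4)"
    by (metis ennreal_add_diff_cancel_right ennreal_neq_top)
  also have "\<dots> = ennreal (1/4)"
    by (simp flip: ennreal_1 add: ennreal_minus)
  finally show ?thesis .
qed

lemma Beta_one_half_three_halves: "Beta (1/2) (3/2) = pi / 2"
proof -
  have "(1/2::real) \<notin> \<int>\<^sub>\<le>\<^sub>0"
    by (auto elim!: nonpos_Ints_cases)
  then have Gamma_3_2: "Gamma (3/2::real) = 1/2 * sqrt pi"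
    using Gamma_plus1[of "1/2::real"] by (simp add: Gamma_one_half_real)
  have Gamma_2: "Gamma (1/2 + 3/2 :: real) = 1"
    using Gamma_plus1[of "1::real"] by (simp add: one_add_one)
  have "sqrt pi * sqrt pi = pi"
    by simp
  then show ?thesis
    unfolding Beta_def Gamma_3_2 Gamma_2 Gamma_one_half_real by (simp add: mult.assoc[symmetric])
qed

lemma nn_integral_unit_half_disc:
  "(\<integral>\<^sup>+s. ennreal (sqrt (1 - s\<^sup>2)) * indicator {-1..1} s \<partial>lborel) = ennreal (pi / 2)"
proof -
  have "(\<integral>\<^sup>+s. indicator {-1..1} s * sqrt (1 - s\<^sup>2) ^ 1 \<partial>lborel) = ennreal (Beta (1/2) (real 1 / 2 + 1))"
    by (rule emeasure_cball_aux_integral)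
  moreover have "ennreal (sqrt (1 - s\<^sup>2)) * indicator {-1..1} s = indicator {-1..1} s * sqrt (1 - s\<^sup>2) ^ 1" for s
    by (simp split: split_indicator)
  ultimately show ?thesis
    by (simp add: Beta_one_half_three_halves)
qed

lemma nn_integral_half_disc:
  fixes a b :: real
  assumes "a \<le> b"
  shows "(\<integral>\<^sup>+y. ennreal (sqrt ((y - a) * (b - y))) * indicator {a..b} y \<partial>lborel) = ennreal (pi * (b - a)\<^sup>2 / 8)"
proof (cases "a = b")
  case True
  have "(\<integral>\<^sup>+y. ennreal (sqrt ((y - a) * (b - y))) * indicator {a..b} y \<partial>lborel) = (\<integral>\<^sup>+(y::real). 0 \<partial>lborel)"
    by (rule nn_integral_lborel_cong_finite[where S = "{a}"]) (use True in \<open>auto simp: indicator_def\<close>)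
  then show ?thesis
    using True by simp
next
  case False
  define r where "r = (b - a) / 2"
  define c where "c = (a + b) / 2"
  have r: "0 < r"
    using assms False by (simp add: r_def)
  have "(\<integral>\<^sup>+y. ennreal (sqrt ((y - a) * (b - y))) * indicator {a..b} y \<partial>lborel)
      = ennreal \<bar>r\<bar> * (\<integral>\<^sup>+s. ennreal (sqrt ((c + r * s - a) * (b - (c + r * s)))) * indicator {a..b} (c + r * s) \<partial>lborel)"
    by (rule nn_integral_real_affine) (use r in auto)
  also have "(\<integral>\<^sup>+s. ennreal (sqrt ((c + r * s - a) * (b - (c + r * s)))) * indicator {a..b} (c + r * s) \<partial>lborel)
      = (\<integral>\<^sup>+s. ennreal r * (ennreal (sqrt (1 - s\<^sup>2)) * indicator {-1..1} s) \<partial>lborel)"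
  proof (rule nn_integral_cong)
    fix s :: real
    have "(c + r * s - a) * (b - (c + r * s)) = r\<^sup>2 * (1 - s\<^sup>2)"
      by (simp add: r_def c_def field_simps power2_eq_square)
    moreover have "c + r * s \<in> {a..b} \<longleftrightarrow> s \<in> {-1..1}"
    proof -
      have "a = c - r" "b = c + r"
        by (simp_all add: r_def c_def field_simps)
      moreover have "r * (-1) \<le> r * s \<longleftrightarrow> -1 \<le> s" "r * s \<le> r * 1 \<longleftrightarrow> s \<le> 1"
        using r by (simp_all only: mult_le_cancel_left_pos)
      ultimately show ?thesis
        by auto
    qed
    ultimately show "ennreal (sqrt ((c + r * s - a) * (b - (c + r * s)))) * indicator {a..b} (c + r * s)
        = ennreal r * (ennreal (sqrt (1 - s\<^sup>2)) * indicator {-1..1} s)"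
      using r by (simp add: real_sqrt_mult indicator_def ennreal_mult')
  qed
  also have "\<dots> = ennreal r * ennreal (pi / 2)"
    by (simp add: nn_integral_cmult nn_integral_unit_half_disc)
  also have "ennreal \<bar>r\<bar> * (ennreal r * ennreal (pi / 2)) = ennreal (r * (r * (pi / 2)))"
    using r by (simp only: abs_of_pos ennreal_mult'[OF less_imp_le[OF r]])
  also have "r * (r * (pi / 2)) = pi * (b - a)\<^sup>2 / 8"
    by (simp add: r_def power2_eq_square field_simps)
  finally show ?thesis .
qed

lemma nn_integral_triangle_area_upper:
  assumes x: "x \<in> {0..1}"
  shows "(\<integral>\<^sup>+y. ennreal (if x < y then if cut_triangle x y then cut_area x y else 0 else 0) \<partial>uniform01)
    = ennreal (if x < 1/2 then sqrt ((1/2 - x) / 2) * (pi * x\<^sup>2 / 8) else 0)"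
proof -
  have "(\<integral>\<^sup>+y. ennreal (if x < y then if cut_triangle x y then cut_area x y else 0 else 0) \<partial>uniform01)
      = (\<integral>\<^sup>+y. ennreal (if x < y then if cut_triangle x y then cut_area x y else 0 else 0) * indicator {0..1} y \<partial>lborel)"
    by (rule nn_integral_uniform01) (simp, measurable)
  also have "\<dots> = ennreal (if x < 1/2 then sqrt ((1/2 - x) / 2) * (pi * x\<^sup>2 / 8) else 0)"
  proof (cases "x < 1/2")
    case True
    have "(\<integral>\<^sup>+y. ennreal (if x < y then if cut_triangle x y then cut_area x y else 0 else 0) * indicator {0..1} y \<partial>lborel)
        = (\<integral>\<^sup>+y. ennreal (sqrt ((1/2 - x) / 2))
            * (ennreal (sqrt ((y - 1/2) * (x + 1/2 - y))) * indicator {1/2..x+1/2} y) \<partial>lborel)"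
    proof (rule nn_integral_lborel_cong_finite[where S = "{1/2, x + 1/2}"])
      fix y :: real
      assume y: "y \<notin> {1/2, x + 1/2}"
      show "ennreal (if x < y then if cut_triangle x y then cut_area x y else 0 else 0) * indicator {0..1} y
          = ennreal (sqrt ((1/2 - x) / 2)) * (ennreal (sqrt ((y - 1/2) * (x + 1/2 - y))) * indicator {1/2..x+1/2} y)"
      proof (cases "1/2 < y \<and> y < x + 1/2")
        case inside: True
        then have "x < y" "y \<in> {0..1}" "cut_triangle x y"
          using x True by (auto simp: cut_triangle_ordered)
        then show ?thesis
          using inside True by (simp add: cut_area_ordered indicator_def ennreal_mult')
      next
        case outside: False
        then have "y < 1/2 \<or> x + 1/2 < y"
          using y by auto
        then have "\<not> (x < y \<and> cut_triangle x y)"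
          by (auto simp: cut_triangle_ordered)
        then show ?thesis
          using outside by (auto simp: indicator_def)
      qed
    qed simp
    also have "\<dots> = ennreal (sqrt ((1/2 - x) / 2)) * ennreal (pi * x\<^sup>2 / 8)"
      using nn_integral_half_disc[of "1/2" "x + 1/2"] x by (simp add: nn_integral_cmult)
    also have "\<dots> = ennreal (sqrt ((1/2 - x) / 2) * (pi * x\<^sup>2 / 8))"
      by (rule ennreal_mult[symmetric]) (use True in auto)
    finally show ?thesis
      using True by simp
  next
    case False
    have "(\<integral>\<^sup>+y. ennreal (if x < y then if cut_triangle x y then cut_area x y else 0 else 0) * indicator {0..1} y \<partial>lborel)
        = (\<integral>\<^sup>+(y::real). 0 \<partial>lborel)"
      by (rule nn_integral_lborel_cong_finite[where S = "{}"]) (use False in \<open>auto simp: cut_triangle_ordered\<close>)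
    then show ?thesis
      using False by simp
  qed
  finally show ?thesis .
qed

lemma area_antiderivative:
  fixes t :: real
  assumes "0 < t"
  shows "((\<lambda>t. sqrt (t / 2) * (t * (1/6 - 2 * t / 5 + 2 * t\<^sup>2 / 7))) has_real_derivative sqrt (t / 2) * (1/2 - t)\<^sup>2) (at t)"
proof -
  have "sqrt (t / 2) * sqrt (t / 2) = t / 2" "0 < sqrt (t / 2)"
    using assms by simp_all
  then have inv: "inverse (sqrt (t / 2)) = 2 * sqrt (t / 2) / t"
    using assms by (simp add: field_simps)
  have sqrt: "((\<lambda>t. sqrt (t / 2)) has_real_derivative inverse (sqrt (t / 2)) / 2 * (1/2)) (at t)"
    by (rule DERIV_chain2[OF DERIV_real_sqrt]) (use assms in \<open>auto intro!: derivative_eq_intros\<close>)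
  have poly: "((\<lambda>t. t * (1/6 - 2 * t / 5 + 2 * t\<^sup>2 / 7)) has_real_derivative 1/6 - 4 * t / 5 + 6 * t\<^sup>2 / 7) (at t)"
    by (auto intro!: derivative_eq_intros simp: field_simps power2_eq_square)
  have "inverse (sqrt (t / 2)) / 2 * (1/2) * (t * (1/6 - 2 * t / 5 + 2 * t\<^sup>2 / 7))
      + (1/6 - 4 * t / 5 + 6 * t\<^sup>2 / 7) * sqrt (t / 2) = sqrt (t / 2) * (1/2 - t)\<^sup>2"
    unfolding inv using assms by (simp add: field_simps power2_eq_square)
  then show ?thesis
    using DERIV_mult[OF sqrt poly] by simp
qed

lemma cut_expectation_triangle_area:
  "cut_expectation (\<lambda>x y. if cut_triangle x y then cut_area x y else 0) = ennreal (pi / 420)"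
proof -
  let ?K = "\<lambda>t::real. sqrt (t / 2) * (t * (1/6 - 2 * t / 5 + 2 * t\<^sup>2 / 7))"
  let ?F = "\<lambda>x. - (pi / 8) * ?K (1/2 - x)"
  have "cut_expectation (\<lambda>x y. if cut_triangle x y then cut_area x y else 0)
      = 2 * (\<integral>\<^sup>+x. \<integral>\<^sup>+y. ennreal (if x < y then if cut_triangle x y then cut_area x y else 0 else 0)
          \<partial>uniform01 \<partial>uniform01)"
    by (rule cut_expectation_symmetric) (auto simp: cut_triangle_commute cut_area_commute)
  also have "(\<integral>\<^sup>+x. \<integral>\<^sup>+y. ennreal (if x < y then if cut_triangle x y then cut_area x y else 0 else 0)
      \<partial>uniform01 \<partial>uniform01)
      = (\<integral>\<^sup>+x. ennreal (if x < 1/2 then sqrt ((1/2 - x) / 2) * (pi * x\<^sup>2 / 8) else 0) * indicator {0..1} x \<partial>lborel)"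
    by (rule nn_integral_uniform01) (simp_all add: nn_integral_triangle_area_upper)
  also have "\<dots> = (\<integral>\<^sup>+x. ennreal (sqrt ((1/2 - x) / 2) * (pi * x\<^sup>2 / 8)) * indicator {0..1/2} x \<partial>lborel)"
    by (rule nn_integral_lborel_cong_finite[where S = "{1/2}"]) (auto simp: indicator_def)
  also have "\<dots> = ennreal (?F (1/2) - ?F 0)"
  proof (rule nn_integral_interval_FTC(1))
    fix y :: real
    assume y: "0 < y" "y < 1/2"
    have "((\<lambda>x. ?K (1/2 - x)) has_real_derivative sqrt ((1/2 - y) / 2) * (1/2 - (1/2 - y))\<^sup>2 * (-1)) (at y)"
      by (rule DERIV_chain2[OF area_antiderivative]) (use y in \<open>auto intro!: derivative_eq_intros\<close>)
    then show "(?F has_real_derivative sqrt ((1/2 - y) / 2) * (pi * y\<^sup>2 / 8)) (at y)"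
      by (rule DERIV_cong[OF DERIV_cmult]) (simp add: algebra_simps)
  qed (auto intro!: continuous_intros)
  also have "?F (1/2) - ?F 0 = pi / 840"
  proof -
    have "sqrt (1/4) = (1/2::real)"
      by (rule real_sqrt_unique) (auto simp: power2_eq_square)
    then show ?thesis
      by (simp add: power2_eq_square)
  qed
  finally show ?thesis
    by (simp add: numeral_mult_ennreal)
qed

lemma nn_integral_renewal:
  fixes f :: "(nat \<Rightarrow> real) \<Rightarrow> ennreal"
  assumes [measurable]: "f \<in> borel_measurable Omega"
    and finite: "(\<integral>\<^sup>+u. f u \<partial>Omega) \<noteq> \<infinity>"
    and renewal: "\<And>x y. AE w in Omega. f (prepend2 x y w) = ennreal (g x y) + ennreal (h x y) * f w"
    and [measurable]: "(\<lambda>z. g (fst z) (snd z)) \<in> borel_measurable (uniform01 \<Otimes>\<^sub>M uniform01)"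
      "(\<lambda>z. h (fst z) (snd z)) \<in> borel_measurable (uniform01 \<Otimes>\<^sub>M uniform01)"
    and g: "cut_expectation g = ennreal a" and h: "cut_expectation h = ennreal b"
    and "0 \<le> a" "0 \<le> b" "b < 1"
  shows "(\<integral>\<^sup>+u. f u \<partial>Omega) = ennreal (a / (1 - b))"
proof -
  define X where "X = (\<integral>\<^sup>+u. f u \<partial>Omega)"
  have "X = (\<integral>\<^sup>+x. \<integral>\<^sup>+y. \<integral>\<^sup>+w. f (prepend2 x y w) \<partial>Omega \<partial>uniform01 \<partial>uniform01)"
    unfolding X_def by (rule nn_integral_Omega_prepend2) measurable
  also have "\<dots> = (\<integral>\<^sup>+x. \<integral>\<^sup>+y. ennreal (g x y) + ennreal (h x y) * X \<partial>uniform01 \<partial>uniform01)"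
  proof (intro nn_integral_cong)
    fix x y
    have "(\<integral>\<^sup>+w. f (prepend2 x y w) \<partial>Omega) = (\<integral>\<^sup>+w. ennreal (g x y) + ennreal (h x y) * f w \<partial>Omega)"
      by (rule nn_integral_cong_AE[OF renewal])
    also have "\<dots> = ennreal (g x y) + ennreal (h x y) * X"
      unfolding X_def by (simp add: nn_integral_add nn_integral_cmult Omega.emeasure_space_1[unfolded space_Omega])
    finally show "(\<integral>\<^sup>+w. f (prepend2 x y w) \<partial>Omega) = ennreal (g x y) + ennreal (h x y) * X" .
  qed
  also have "\<dots> = ennreal a + ennreal b * X"
    unfolding g[symmetric] h[symmetric] by (rule cut_expectation_add_mult) measurable
  finally have X: "X = ennreal a + ennreal b * X" .
  \<comment> \<open>Finiteness rules out the second solution \<open>X = \<infinity>\<close> of this equation.\<close>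
  obtain r where r: "X = ennreal r" "0 \<le> r"
    using finite unfolding X_def by (cases "\<integral>\<^sup>+u. f u \<partial>Omega") auto
  have "ennreal r = ennreal (a + b * r)"
    using X r \<open>0 \<le> a\<close> \<open>0 \<le> b\<close> by (simp add: ennreal_mult ennreal_plus)
  then have "r = a + b * r"
    using r \<open>0 \<le> a\<close> \<open>0 \<le> b\<close> by (subst (asm) ennreal_inj) auto
  then have "r = a / (1 - b)"
    using \<open>b < 1\<close> by (simp add: field_simps)
  then show ?thesis
    using r by (simp add: X_def)
qed

lemma ex_rel_tri_prepend2: "(\<exists>k. rel_tri (prepend2 x y w) k) \<longleftrightarrow> cut_triangle x y \<or> (\<exists>k. rel_tri w k)"
  by (metis rel_tri_prepend2_0 rel_tri_prepend2_Suc not0_implies_Suc)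

lemma AE_Omega_terminates: "AE u in Omega. \<exists>k. rel_tri u k"
proof -
  define N where "N = {u \<in> space Omega. \<forall>k. \<not> rel_tri u k}"
  have N_sets [measurable]: "N \<in> sets Omega"
    unfolding N_def by measurable
  have "emeasure Omega N = (\<integral>\<^sup>+u. indicator N u \<partial>Omega)"
    by simp
  also have "\<dots> = ennreal (0 / (1 - 3/4))"
  proof (rule nn_integral_renewal[where g = "\<lambda>_ _. 0" and h = "nontriangle_moment 0"])
    fix x y
    have "indicator N (prepend2 x y w) = ennreal 0 + ennreal (nontriangle_moment 0 x y) * indicator N w" for w
      using ex_rel_tri_prepend2[of x y w] by (auto simp: N_def nontriangle_moment_def indicator_def)
    then show "AE w in Omega. indicator N (prepend2 x y w) = ennreal 0 + ennreal (nontriangle_moment 0 x y) * indicator N w"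
      by simp
  next
    show "cut_expectation (\<lambda>_ _. 0) = ennreal 0"
      by (simp add: cut_expectation_def)
  qed (simp_all add: cut_expectation_nontriangle)
  finally have N_null: "emeasure Omega N = 0"
    by simp
  have "{u \<in> space Omega. \<not> (\<exists>k. rel_tri u k)} = N"
    by (simp add: N_def)
  from AE_iff_measurable[OF N_sets this] N_null show ?thesis
    by simp
qed

lemma final_perimeter_le_1: "\<forall>n. u n \<in> {0..1} \<Longrightarrow> final_perimeter u \<le> 1"
  unfolding final_perimeter_eq by (rule seg_len_le_1) blast

lemma final_area_le_1:
  assumes "\<forall>n. u n \<in> {0..1}"
  shows "final_area u \<le> 1"
proof -
  let ?L = "seg_len u (stop_time u)" and ?A = "cut_area (u (2 * stop_time u)) (u (2 * stop_time u + 1))"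
  have "?L\<^sup>2 \<le> 1"
    using seg_len_le_1[of u] seg_len_nonneg assms by (intro power_le_one) auto
  moreover have "?A \<le> 1"
    using assms by (intro cut_area_le_1) auto
  then have "?L\<^sup>2 * ?A \<le> ?L\<^sup>2 * 1"
    by (intro mult_left_mono) auto
  ultimately show ?thesis
    unfolding final_area_eq by simp
qed

lemma final_area_nonneg:
  assumes "\<exists>k. rel_tri u k"
  shows "0 \<le> final_area u"
proof -
  have "rel_tri u (stop_time u)"
    unfolding stop_time_def using assms by (rule LeastI_ex)
  then show ?thesis
    unfolding final_area_eq by (simp add: rel_tri_def cut_triangle_def[symmetric] cut_area_nonneg)
qed

lemma has_bochner_integral_final_perimeter: "has_bochner_integral Omega final_perimeter (1/2)"
proof (rule has_bochner_integral_nn_integral)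
  have "AE u in Omega. ennreal (final_perimeter u) \<le> 1"
    using AE_Omega_unit_interval by eventually_elim (simp add: final_perimeter_le_1)
  then have "(\<integral>\<^sup>+u. ennreal (final_perimeter u) \<partial>Omega) \<le> 1"
    by (rule Omega.nn_integral_le_const[rotated]) simp
  then have finite: "(\<integral>\<^sup>+u. ennreal (final_perimeter u) \<partial>Omega) \<noteq> \<infinity>"
    by (auto simp: top_unique)
  have step: "AE w in Omega. ennreal (final_perimeter (prepend2 x y w))
      = ennreal (if cut_triangle x y then 1 else 0) + ennreal (nontriangle_moment 1 x y) * ennreal (final_perimeter w)"
    for x y
    using AE_Omega_terminates
    by eventually_elim (simp add: final_perimeter_prepend2 nontriangle_moment_def ennreal_mult' longest_piece_nonneg)
  have g: "(\<lambda>z. if cut_triangle (fst z) (snd z) then 1 else 0) \<in> borel_measurable (uniform01 \<Otimes>\<^sub>M uniform01)"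
    by measurable
  have h: "(\<lambda>z. nontriangle_moment 1 (fst z) (snd z)) \<in> borel_measurable (uniform01 \<Otimes>\<^sub>M uniform01)"
    by measurable
  have "(\<integral>\<^sup>+u. ennreal (final_perimeter u) \<partial>Omega) = ennreal ((1/4) / (1 - 1/2))"
    by (rule nn_integral_renewal[OF measurable_compose[OF measurable_final_perimeter measurable_ennreal]
          finite step g h cut_expectation_triangle cut_expectation_longest_piece]) simp_all
  then show "(\<integral>\<^sup>+u. ennreal (final_perimeter u) \<partial>Omega) = ennreal (1/2)"
    by simp
  show "AE u in Omega. 0 \<le> final_perimeter u"
    by (simp add: final_perimeter_eq seg_len_nonneg)
qed (rule measurable_final_perimeter, simp)

lemma has_bochner_integral_final_area: "has_bochner_integral Omega final_area (8 * pi / 2205)"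
proof (rule has_bochner_integral_nn_integral)
  have "AE u in Omega. ennreal (final_area u) \<le> 1"
    using AE_Omega_unit_interval by eventually_elim (simp add: final_area_le_1)
  then have "(\<integral>\<^sup>+u. ennreal (final_area u) \<partial>Omega) \<le> 1"
    by (rule Omega.nn_integral_le_const[rotated]) simp
  then have finite: "(\<integral>\<^sup>+u. ennreal (final_area u) \<partial>Omega) \<noteq> \<infinity>"
    by (auto simp: top_unique)
  have step: "AE w in Omega. ennreal (final_area (prepend2 x y w))
      = ennreal (if cut_triangle x y then cut_area x y else 0) + ennreal (nontriangle_moment 2 x y) * ennreal (final_area w)"
    for x y
    using AE_Omega_terminates
    by eventually_elim (simp add: final_area_prepend2 nontriangle_moment_def ennreal_mult')
  have g: "(\<lambda>z. if cut_triangle (fst z) (snd z) then cut_area (fst z) (snd z) else 0)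
      \<in> borel_measurable (uniform01 \<Otimes>\<^sub>M uniform01)"
    by measurable
  have h: "(\<lambda>z. nontriangle_moment 2 (fst z) (snd z)) \<in> borel_measurable (uniform01 \<Otimes>\<^sub>M uniform01)"
    by measurable
  have "(\<integral>\<^sup>+u. ennreal (final_area u) \<partial>Omega) = ennreal ((pi / 420) / (1 - 11/32))"
    by (rule nn_integral_renewal[OF measurable_compose[OF measurable_final_area measurable_ennreal]
          finite step g h cut_expectation_triangle_area cut_expectation_longest_piece_sq]) simp_all
  then show "(\<integral>\<^sup>+u. ennreal (final_area u) \<partial>Omega) = ennreal (8 * pi / 2205)"
    by simp
  show "AE u in Omega. 0 \<le> final_area u"
    using AE_Omega_terminates by eventually_elim (rule final_area_nonneg)
qed (rule measurable_final_area, simp)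

theorem mainTheorem1:
  shows "(AE u in Omega. \<exists>k. rel_tri u k)
       \<and> has_bochner_integral Omega final_perimeter (1/2)
       \<and> has_bochner_integral Omega final_area (8 * pi / 2205)"
  using AE_Omega_terminates has_bochner_integral_final_perimeter has_bochner_integral_final_area
  by (intro conjI)

end
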